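(* Let $\mathfrak g$ be a finite-dimensional nilpotent Lie algebra over a field $k$ of characteristic zero. If $\mathfrak g$ admits an LR-structure, then $\mathfrak g$ also admits a complete LR-structure.
   Context: An LR-algebra is a vector space $A$ with a bilinear product $\cdot$ satisfying $x\cdot(y\cdot z)=y\cdot(x\cdot z)$ and $(x\cdot y)\cdot z=(x\cdot z)\cdot y$ for all $x,y,z\in A$. An LR-structure on a Lie algebra $\mathfrak g$ is an LR-algebra product $\cdot$ on the underlying vector space of $\mathfrak g$ such that $x\cdot y-y\cdot x=[x,y]$ for all $x,y$. With $R(x)y=y\cdot x$, an LR-structure is called complete if $R(x)$ is nilpotent for every $x$. *)

theory Defs
  imports Main "HOL.Vector_Spaces"
begin

text \<open>A Lie algebra is modelled on the whole carrier type 'v, which is a vector space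
  over the field 'k via the scalar multiplication scale (library locale vector_space).\<close>

definition bilinear_map :: "('k::field \<Rightarrow> 'v::ab_group_add \<Rightarrow> 'v) \<Rightarrow> ('v \<Rightarrow> 'v \<Rightarrow> 'v) \<Rightarrow> bool" where
  "bilinear_map scale p \<longleftrightarrow>
     (\<forall>x y z. p (x + y) z = p x z + p y z) \<and>
     (\<forall>x y z. p x (y + z) = p x y + p x z) \<and>
     (\<forall>a x y. p (scale a x) y = scale a (p x y)) \<and>
     (\<forall>a x y. p x (scale a y) = scale a (p x y))"

definition lie_algebra :: "('k::field \<Rightarrow> 'v::ab_group_add \<Rightarrow> 'v) \<Rightarrow> ('v \<Rightarrow> 'v \<Rightarrow> 'v) \<Rightarrow> bool" where
  "lie_algebra scale br \<longleftrightarrow>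
     vector_space scale \<and> bilinear_map scale br \<and>
     (\<forall>x. br x x = 0) \<and>
     (\<forall>x y z. br x (br y z) + br y (br z x) + br z (br x y) = 0)"

definition finite_dimensional :: "('k::field \<Rightarrow> 'v::ab_group_add \<Rightarrow> 'v) \<Rightarrow> bool" where
  "finite_dimensional scale \<longleftrightarrow> (\<exists>B. finite B \<and> module.span scale B = UNIV)"

primrec lower_central_series ::
  "('k::field \<Rightarrow> 'v::ab_group_add \<Rightarrow> 'v) \<Rightarrow> ('v \<Rightarrow> 'v \<Rightarrow> 'v) \<Rightarrow> nat \<Rightarrow> 'v set" where
  "lower_central_series scale br 0 = UNIV"
| "lower_central_series scale br (Suc n) =
     module.span scale {br x y | x y. y \<in> lower_central_series scale br n}"

definition nilpotent_lie :: "('k::field \<Rightarrow> 'v::ab_group_add \<Rightarrow> 'v) \<Rightarrow> ('v \<Rightarrow> 'v \<Rightarrow> 'v) \<Rightarrow> bool" where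
  "nilpotent_lie scale br \<longleftrightarrow> (\<exists>n. lower_central_series scale br n = {0})"

definition LR_structure ::
  "('k::field \<Rightarrow> 'v::ab_group_add \<Rightarrow> 'v) \<Rightarrow> ('v \<Rightarrow> 'v \<Rightarrow> 'v) \<Rightarrow> ('v \<Rightarrow> 'v \<Rightarrow> 'v) \<Rightarrow> bool" where
  "LR_structure scale br p \<longleftrightarrow>
     bilinear_map scale p \<and>
     (\<forall>x y z. p x (p y z) = p y (p x z)) \<and>
     (\<forall>x y z. p (p x y) z = p (p x z) y) \<and>
     (\<forall>x y. p x y - p y x = br x y)"

definition complete_LR_structure ::
  "('k::field \<Rightarrow> 'v::ab_group_add \<Rightarrow> 'v) \<Rightarrow> ('v \<Rightarrow> 'v \<Rightarrow> 'v) \<Rightarrow> ('v \<Rightarrow> 'v \<Rightarrow> 'v) \<Rightarrow> bool" where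
  "complete_LR_structure scale br p \<longleftrightarrow>
     LR_structure scale br p \<and> (\<forall>x. \<exists>n. ((\<lambda>y. p y x) ^^ n) = (\<lambda>_. 0))"

end

theory Submission
  imports Defs
begin

text \<open>
  For an LR-product p call v a nil vector if every right multiplication
  R(y) = (\<lambda>z. p z y) is nilpotent on v; p is complete iff all vectors are nil vectors.
  If some R(e) is not nilpotent on some v, take the Fitting decomposition V = K \<oplus> I of
  R(e), where S = R(e)^N has kernel K and image I.  The LR-identities show that K is a
  right ideal and I a commutative two-sided ideal, hence K annihilates I, and the product
  q x y = p x (\<pi> y), with \<pi> the projection onto K along I, is again an LR-structure
  for the same Lie bracket.  Its nil vectors contain those of p (this uses that the
  adjoint maps are nilpotent) and the I-component of v, which is no nil vector of p.
  Since the nil vectors form a subspace, their dimension strictly grows, so finitely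
  many steps produce a complete LR-structure.
\<close>

lemma funpow_zero_mono:
  fixes f :: "'a::zero \<Rightarrow> 'a"
  assumes "f 0 = 0" and "(f ^^ n) x = 0" and "n \<le> m"
  shows "(f ^^ m) x = 0"
proof -
  define k where "k = m - n"
  have m: "m = k + n" using assms(3) by (simp add: k_def)
  have "(f ^^ j) 0 = 0" for j by (induction j) (simp_all add: assms(1))
  then show ?thesis using assms(2) by (simp add: m funpow_add)
qed

lemma funpow_eq_on_invariant:
  fixes f g :: "'a \<Rightarrow> 'a"
  assumes agree: "\<And>x. x \<in> A \<Longrightarrow> f x = g x"
    and invariant: "\<And>x. x \<in> A \<Longrightarrow> f x \<in> A"
    and "x \<in> A"
  shows "(f ^^ n) x = (g ^^ n) x"
  using \<open>x \<in> A\<close>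
proof (induction n arbitrary: x)
  case (Suc n)
  have "(f ^^ Suc n) x = (g ^^ n) (f x)"
    using Suc.IH[OF invariant[OF Suc.prems]] by (simp add: funpow_Suc_right del: funpow.simps)
  also have "\<dots> = (g ^^ Suc n) x"
    using agree[OF Suc.prems] by (simp add: funpow_Suc_right del: funpow.simps)
  finally show ?case .
qed simp

lemma iterate_stable:
  assumes step: "\<And>n. A (Suc n) = F (A n)" and stable: "A (Suc n0) = A n0" and "n0 \<le> m"
  shows "A m = A n0"
  using \<open>n0 \<le> m\<close>
proof (induction m rule: dec_induct)
  case (step m)
  then show ?case using assms(1)[of m] assms(1)[of n0] stable by simp
qed simp

lemma uniform_nilpotency_index:
  fixes f :: "'a::zero \<Rightarrow> 'a"
  assumes "finite B" and "f 0 = 0" and "\<forall>b\<in>B. \<exists>n. (f ^^ n) b = 0"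
  shows "\<exists>n. \<forall>b\<in>B. (f ^^ n) b = 0"
  using assms(1,3)
proof (induction B rule: finite_induct)
  case (insert b B)
  obtain n where n: "\<forall>c\<in>B. (f ^^ n) c = 0" using insert by blast
  obtain m where m: "(f ^^ m) b = 0" using insert.prems by blast
  have "(f ^^ max n m) c = 0" if "c \<in> insert b B" for c
  proof (cases "c = b")
    case True
    then show ?thesis using funpow_zero_mono[of f m b "max n m"] assms(2) m by simp
  next
    case False
    then show ?thesis using that n funpow_zero_mono[of f n c "max n m"] assms(2) by simp
  qed
  then show ?case by blast
qed simp

text \<open>Linear endomorphisms of a vector space are handled with the library lemmas about
  linear maps between two vector spaces, instantiated with both spaces equal.\<close>

sublocale vector_space \<subseteq> endo: vector_space_pair scale scale ..

context vector_space
begin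

abbreviation endomorphism :: "('b \<Rightarrow> 'b) \<Rightarrow> bool" where
  "endomorphism T \<equiv> Vector_Spaces.linear scale scale T"

lemma endomorphism_funpow: "endomorphism T \<Longrightarrow> endomorphism (T ^^ n)"
  by (induction n) (simp_all add: linear_id Vector_Spaces.linear_compose)

end

context finite_dimensional_vector_space
begin

text \<open>In a finite-dimensional space an increasing chain of subspaces becomes stationary,
  since a strict inclusion raises the dimension.\<close>

lemma ascending_chain_stabilizes:
  assumes sub: "\<And>n. subspace (A n)" and mono: "\<And>n. A n \<subseteq> A (Suc n)"
  shows "\<exists>n. A (Suc n) = A n"
proof (rule ccontr)
  assume "\<nexists>n. A (Suc n) = A n"
  then have strict: "dim (A n) < dim (A (Suc n))" for n
    using mono[of n] by (metis dim_psubset psubsetI span_eq_iff sub)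
  have "n \<le> dim (A n)" for n
  proof (induction n)
    case (Suc n)
    then show ?case using strict[of n] by linarith
  qed simp
  then have "Suc dimension \<le> dimension" using dim_subset_UNIV le_trans by blast
  then show False by simp
qed

lemma descending_chain_stabilizes:
  assumes sub: "\<And>n. subspace (A n)" and anti: "\<And>n. A (Suc n) \<subseteq> A n"
  shows "\<exists>n. A (Suc n) = A n"
proof (rule ccontr)
  assume "\<nexists>n. A (Suc n) = A n"
  then have strict: "dim (A (Suc n)) < dim (A n)" for n
    using anti[of n] by (metis dim_psubset psubsetI span_eq_iff sub)
  have "dim (A n) + n \<le> dim (A 0)" for n
  proof (induction n)
    case (Suc n)
    then show ?case using strict[of n] by linarith
  qed simp
  then have "dim (A (Suc dimension)) + Suc dimension \<le> dimension"
    using dim_subset_UNIV le_trans by blast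
  then show False by simp
qed

end

locale complementary_subspaces = vector_space +
  fixes K I :: "'b set"
  assumes subspace_K: "subspace K"
    and subspace_I: "subspace I"
    and K_inter_I: "K \<inter> I \<subseteq> {0}"
    and K_plus_I: "\<exists>a\<in>K. u - a \<in> I"
begin

definition proj :: "'b \<Rightarrow> 'b" where
  "proj u = (SOME a. a \<in> K \<and> u - a \<in> I)"

lemma proj_in_K: "proj u \<in> K"
  and proj_complement_in_I: "u - proj u \<in> I"
  using someI_ex[of "\<lambda>a. a \<in> K \<and> u - a \<in> I"] K_plus_I[of u] by (auto simp: proj_def)

lemma proj_unique:
  assumes "a \<in> K" and "u - a \<in> I"
  shows "proj u = a"
proof -
  have "proj u - a \<in> K" using subspace_diff[OF subspace_K proj_in_K assms(1)] .
  moreover have "proj u - a = (u - a) - (u - proj u)" by (simp add: algebra_simps)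
  then have "proj u - a \<in> I" using subspace_diff[OF subspace_I assms(2) proj_complement_in_I[of u]] by simp
  ultimately show ?thesis using K_inter_I by auto
qed

text \<open>Uniqueness of the decomposition makes the projection linear.\<close>

lemma linear_proj: "endomorphism proj"
proof -
  have "proj (x + y) = proj x + proj y" for x y
  proof (rule proj_unique)
    show "proj x + proj y \<in> K" using subspace_add[OF subspace_K proj_in_K proj_in_K] .
    have "(x - proj x) + (y - proj y) \<in> I"
      using subspace_add[OF subspace_I proj_complement_in_I proj_complement_in_I] .
    then show "x + y - (proj x + proj y) \<in> I" by (simp add: algebra_simps)
  qed
  moreover have "proj (c *s x) = c *s proj x" for c x
  proof (rule proj_unique)
    show "c *s proj x \<in> K" using subspace_scale[OF subspace_K proj_in_K] .
    have "c *s (x - proj x) \<in> I" using subspace_scale[OF subspace_I proj_complement_in_I] .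
    then show "c *s x - c *s proj x \<in> I" by (simp add: scale_right_diff_distrib)
  qed
  ultimately show ?thesis using vector_space_axioms by (simp add: linear_iff)
qed

end

lemma (in finite_dimensional_vector_space) fitting_decomposition:
  assumes T: "endomorphism T"
  shows "\<exists>N. range (T ^^ Suc N) = range (T ^^ N)
           \<and> complementary_subspaces scale {x. (T ^^ N) x = 0} (range (T ^^ N))"
proof -
  define K where "K n = {x. (T ^^ n) x = 0}" for n
  define I where "I n = range (T ^^ n)" for n
  have K_Suc: "K (Suc n) = T -` K n" for n
    by (auto simp: K_def funpow_Suc_right simp del: funpow.simps)
  have I_Suc: "I (Suc n) = T ` I n" for n
    by (simp add: I_def image_comp)
  have subspace_K: "subspace (K n)" for n
    unfolding K_def by (rule endo.linear_subspace_kernel[OF endomorphism_funpow[OF T]])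
  have subspace_I: "subspace (I n)" for n
    unfolding I_def by (rule endo.linear_subspace_image[OF endomorphism_funpow[OF T] subspace_UNIV])
  have "K n \<subseteq> K (Suc n)" for n
    using endo.linear_0[OF T] by (auto simp: K_def)
  then obtain n1 where n1: "K (Suc n1) = K n1"
    using ascending_chain_stabilizes[OF subspace_K] by blast
  have "I (Suc n) \<subseteq> I n" for n
    by (auto simp: I_def funpow_Suc_right simp del: funpow.simps)
  then obtain n2 where n2: "I (Suc n2) = I n2"
    using descending_chain_stabilizes[OF subspace_I] by blast
  define N where "N = max n1 n2"
  have K_stable: "K m = K N" if "N \<le> m" for m
  proof -
    have "K k = K n1" if "n1 \<le> k" for k
      using iterate_stable[of K "\<lambda>A. T -` A", OF K_Suc n1 that] .
    moreover have "n1 \<le> N" by (simp add: N_def)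
    ultimately show ?thesis using \<open>N \<le> m\<close> by (metis le_trans)
  qed
  have I_stable: "I m = I N" if "N \<le> m" for m
  proof -
    have "I k = I n2" if "n2 \<le> k" for k
      using iterate_stable[of I "\<lambda>A. T ` A", OF I_Suc n2 that] .
    moreover have "n2 \<le> N" by (simp add: N_def)
    ultimately show ?thesis using \<open>N \<le> m\<close> by (metis le_trans)
  qed
  have "complementary_subspaces scale (K N) (I N)"
  proof (rule complementary_subspaces.intro[OF vector_space_axioms],
      rule complementary_subspaces_axioms.intro)
    show "subspace (K N)" "subspace (I N)" by (fact subspace_K subspace_I)+
    show "K N \<inter> I N \<subseteq> {0}"
    proof
      fix b assume b: "b \<in> K N \<inter> I N"
      then obtain y where y: "b = (T ^^ N) y" by (auto simp: I_def)
      then have "y \<in> K (N + N)" using b by (simp add: K_def funpow_add)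
      then have "y \<in> K N" using K_stable[of "N + N"] by simp
      then show "b \<in> {0}" using y by (simp add: K_def)
    qed
    fix u
    have "(T ^^ N) u \<in> I (N + N)" using I_stable[of "N + N"] by (simp add: I_def)
    then obtain w where w: "(T ^^ N) u = (T ^^ N) ((T ^^ N) w)" by (auto simp: I_def funpow_add)
    have "u - (T ^^ N) w \<in> K N"
      using w endo.linear_diff[OF endomorphism_funpow[OF T]] by (simp add: K_def)
    moreover have "u - (u - (T ^^ N) w) \<in> I N" by (simp add: I_def)
    ultimately show "\<exists>a\<in>K N. u - a \<in> I N" by blast
  qed
  moreover have "I (Suc N) = I N" using I_stable[of "Suc N"] by simp
  ultimately show ?thesis unfolding K_def I_def by blast
qed

definition nil_vectors :: "('v::zero \<Rightarrow> 'v \<Rightarrow> 'v) \<Rightarrow> 'v set" where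
  "nil_vectors p = {v. \<forall>y. \<exists>n. ((\<lambda>z. p z y) ^^ n) v = 0}"

context vector_space
begin

lemma bilinear_linear_left: "bilinear_map scale p \<Longrightarrow> endomorphism (p x)"
  using vector_space_axioms by (simp add: bilinear_map_def linear_iff)

lemma bilinear_linear_right: "bilinear_map scale p \<Longrightarrow> endomorphism (\<lambda>z. p z y)"
  using vector_space_axioms by (simp add: bilinear_map_def linear_iff)

lemma nil_vectors_subspace:
  assumes p: "bilinear_map scale p"
  shows "subspace (nil_vectors p)"
proof (rule subspaceI)
  show "0 \<in> nil_vectors p" unfolding nil_vectors_def by (auto intro: exI[of _ 0])
next
  fix x y assume x: "x \<in> nil_vectors p" and y: "y \<in> nil_vectors p"
  show "x + y \<in> nil_vectors p" unfolding nil_vectors_def mem_Collect_eq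
  proof
    fix w
    let ?R = "\<lambda>z. p z w"
    have R: "endomorphism ?R" by (rule bilinear_linear_right[OF p])
    obtain n1 n2 where "(?R ^^ n1) x = 0" and "(?R ^^ n2) y = 0"
      using x y unfolding nil_vectors_def by blast
    then have "(?R ^^ max n1 n2) x = 0" and "(?R ^^ max n1 n2) y = 0"
      using funpow_zero_mono[of ?R, OF endo.linear_0[OF R]] by simp_all
    then have "(?R ^^ max n1 n2) (x + y) = 0"
      using endo.linear_add[OF endomorphism_funpow[OF R]] by simp
    then show "\<exists>n. (?R ^^ n) (x + y) = 0" ..
  qed
next
  fix c x assume x: "x \<in> nil_vectors p"
  show "c *s x \<in> nil_vectors p" unfolding nil_vectors_def mem_Collect_eq
  proof
    fix w
    let ?R = "\<lambda>z. p z w"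
    obtain n where "(?R ^^ n) x = 0" using x unfolding nil_vectors_def by blast
    then have "(?R ^^ n) (c *s x) = 0"
      using endo.linear_scale[OF endomorphism_funpow[OF bilinear_linear_right[OF p]]] by simp
    then show "\<exists>n. (?R ^^ n) (c *s x) = 0" ..
  qed
qed

end

locale LR_space = vector_space +
  fixes br p :: "'b \<Rightarrow> 'b \<Rightarrow> 'b"
  assumes LR: "LR_structure scale br p"
begin

abbreviation rmul :: "'b \<Rightarrow> 'b \<Rightarrow> 'b" where
  "rmul y \<equiv> \<lambda>z. p z y"

lemma bilinear: "bilinear_map scale p"
  and left_comm: "p x (p y z) = p y (p x z)"
  and right_comm: "p (p x y) z = p (p x z) y"
  and bracket_eq: "br x y = p x y - p y x"
  using LR by (simp_all add: LR_structure_def)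

lemma linear_lmul: "endomorphism (p x)"
  and linear_rmul: "endomorphism (rmul y)"
  using bilinear_linear_left[OF bilinear] bilinear_linear_right[OF bilinear] .

lemma mult_diff_left: "p (a - b) z = p a z - p b z"
  and mult_diff_right: "p x (a - b) = p x a - p x b"
  and mult_zero_left: "p 0 z = 0"
  and mult_minus_left: "p (- a) z = - p a z"
  using endo.linear_diff[OF linear_rmul] endo.linear_diff[OF linear_lmul]
    endo.linear_0[OF linear_rmul] endo.linear_neg[OF linear_rmul] by blast+

text \<open>Right multiplications commute with each other (right commutativity), hence the
  powers of one of them commute with all others.\<close>

lemma rmul_power_comm: "(rmul e ^^ n) (p x y) = p ((rmul e ^^ n) x) y"
  by (induction n) (simp_all add: right_comm)

text \<open>Left multiplication maps the image of R(e)^(n+1) into the image of R(e)^n, as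
  x (w R(e)^n e) = (w R(e)^n) (x e) by left commutativity.\<close>

lemma lmul_range_rmul_power:
  assumes "b \<in> range (rmul e ^^ Suc n)"
  shows "p x b \<in> range (rmul e ^^ n)"
proof -
  obtain w where "b = p ((rmul e ^^ n) w) e" using assms by auto
  then have "p x b = p ((rmul e ^^ n) w) (p x e)" by (simp add: left_comm)
  also have "\<dots> = (rmul e ^^ n) (p w (p x e))" by (simp add: rmul_power_comm)
  finally show ?thesis by simp
qed

lemma rmul_range_comm: "p (p a e) (p b e) = p (p b e) (p a e)"
proof -
  have "p (p a e) (p b e) = p (p a (p b e)) e" by (rule right_comm)
  also have "\<dots> = p (p b (p a e)) e" by (simp add: left_comm)
  also have "\<dots> = p (p b e) (p a e)" by (rule right_comm[symmetric])
  finally show ?thesis .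
qed

end

locale LR_splitting = LR_space scale br p + complementary_subspaces scale K I
  for scale :: "'a::field \<Rightarrow> 'b::ab_group_add \<Rightarrow> 'b" (infixr \<open>*s\<close> 75)
    and br p :: "'b \<Rightarrow> 'b \<Rightarrow> 'b" and K I :: "'b set" +
  assumes K_right_ideal: "a \<in> K \<Longrightarrow> p a z \<in> K"
    and I_left_ideal: "b \<in> I \<Longrightarrow> p x b \<in> I"
    and I_right_ideal: "b \<in> I \<Longrightarrow> p b z \<in> I"
    and I_commutative: "b \<in> I \<Longrightarrow> c \<in> I \<Longrightarrow> p b c = p c b"
begin

text \<open>A product of an element of K with one of I lies in K \<inter> I, hence vanishes.\<close>

lemma K_annihilates_I: "a \<in> K \<Longrightarrow> b \<in> I \<Longrightarrow> p a b = 0"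
  using K_right_ideal I_left_ideal K_inter_I by blast

lemma proj_rmul: "proj (p w y) = p (proj w) y"
proof (rule proj_unique)
  show "p (proj w) y \<in> K" using K_right_ideal[OF proj_in_K] .
  show "p w y - p (proj w) y \<in> I"
    using I_right_ideal[OF proj_complement_in_I] by (simp add: mult_diff_left)
qed

lemma proj_rmul_power: "proj ((rmul y ^^ n) w) = (rmul y ^^ n) (proj w)"
  by (induction n) (simp_all add: proj_rmul)

text \<open>Splitting both factors: the part of the right factor lying in I only meets the
  I-part of the left factor, since K annihilates I.\<close>

lemma mult_decomposition: "p x y = p x (proj y) + p (x - proj x) (y - proj y)"
proof -
  have "p x y = p x (proj y) + p x (y - proj y)" by (simp add: mult_diff_right)
  also have "p x (y - proj y) = p (x - proj x) (y - proj y)"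
    using K_annihilates_I[OF proj_in_K proj_complement_in_I] by (simp add: mult_diff_left)
  finally show ?thesis .
qed

definition proj_product :: "'b \<Rightarrow> 'b \<Rightarrow> 'b" where
  "proj_product x y = p x (proj y)"

lemma bilinear_proj_product: "bilinear_map scale proj_product"
  using endo.linear_add[OF linear_proj] endo.linear_scale[OF linear_proj] bilinear
  by (simp add: bilinear_map_def proj_product_def)

lemma proj_product_right_comm: "proj_product (proj_product x y) z = proj_product (proj_product x z) y"
  unfolding proj_product_def by (rule right_comm)

text \<open>Left commutativity survives because K-components absorb the I-part of
  inner products.\<close>

lemma proj_product_left_comm: "proj_product x (proj_product y z) = proj_product y (proj_product x z)"
proof -
  have absorb: "p (proj y) (p x (proj z)) = p (proj y) (p (proj x) (proj z))" for x y
  proof -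
    have "p (proj y) (p (x - proj x) (proj z)) = 0"
      using K_annihilates_I[OF proj_in_K I_right_ideal[OF proj_complement_in_I]] .
    then show ?thesis by (simp add: mult_diff_left mult_diff_right)
  qed
  have "proj_product x (proj_product y z) = p x (p (proj y) (proj z))"
    by (simp add: proj_product_def proj_rmul)
  also have "\<dots> = p (proj y) (p x (proj z))" by (rule left_comm)
  also have "\<dots> = p (proj y) (p (proj x) (proj z))" by (rule absorb)
  also have "\<dots> = p (proj x) (p (proj y) (proj z))" by (rule left_comm)
  also have "\<dots> = p (proj x) (p y (proj z))" by (rule absorb[symmetric])
  also have "\<dots> = p y (p (proj x) (proj z))" by (rule left_comm)
  also have "\<dots> = proj_product y (proj_product x z)"
    by (simp add: proj_product_def proj_rmul)
  finally show ?thesis .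
qed

text \<open>The commutator is unchanged, because the discarded terms form a commutator inside
  the commutative ideal I.\<close>

lemma proj_product_bracket: "proj_product x y - proj_product y x = br x y"
  using mult_decomposition[of x y] mult_decomposition[of y x]
    I_commutative[OF proj_complement_in_I proj_complement_in_I, of x y]
  by (simp add: bracket_eq proj_product_def)

theorem LR_proj_product: "LR_structure scale br proj_product"
  unfolding LR_structure_def
  using bilinear_proj_product proj_product_left_comm proj_product_right_comm proj_product_bracket
  by blast

lemma proj_product_on_I: "b \<in> I \<Longrightarrow> proj_product b y = br (- proj y) b"
  using K_annihilates_I[OF proj_in_K, of b y]
  by (simp add: proj_product_def bracket_eq mult_minus_left endo.linear_neg[OF linear_lmul])

lemma I_subset_nil_vectors:
  assumes ad_nil: "\<And>y. \<exists>n. (br y ^^ n) = (\<lambda>_. 0)"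
  shows "I \<subseteq> nil_vectors proj_product"
proof (unfold nil_vectors_def, intro subsetI CollectI allI)
  fix b y assume b: "b \<in> I"
  obtain n where n: "(br (- proj y) ^^ n) = (\<lambda>_. 0)" using ad_nil by blast
  have "((\<lambda>z. proj_product z y) ^^ n) b = (br (- proj y) ^^ n) b"
  proof (rule funpow_eq_on_invariant[where A = I])
    show "proj_product z y = br (- proj y) z" if "z \<in> I" for z
      using proj_product_on_I[OF that] .
    show "proj_product z y \<in> I" if "z \<in> I" for z
      using I_right_ideal[OF that] by (simp add: proj_product_def)
  qed (rule b)
  then show "\<exists>n. ((\<lambda>z. proj_product z y) ^^ n) b = 0" using n by auto
qed

text \<open>The nil vectors of the old product remain nil vectors: the K-component is handled
  by the old right multiplications, the I-component by the previous lemma.\<close>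

lemma nil_vectors_subset:
  assumes ad_nil: "\<And>y. \<exists>n. (br y ^^ n) = (\<lambda>_. 0)"
  shows "nil_vectors p \<subseteq> nil_vectors proj_product"
proof
  fix u assume u: "u \<in> nil_vectors p"
  have "proj u \<in> nil_vectors proj_product"
    unfolding nil_vectors_def
  proof (intro CollectI allI)
    fix y
    obtain n where n: "(rmul y ^^ n) u = 0" using u unfolding nil_vectors_def by blast
    have "(rmul (proj y) ^^ n) (proj u) = (rmul y ^^ n) (proj u)"
    proof (rule funpow_eq_on_invariant[where A = K])
      show "p a (proj y) = p a y" if "a \<in> K" for a
        using K_annihilates_I[OF that proj_complement_in_I, of y] by (simp add: mult_diff_right)
    qed (simp_all add: proj_in_K K_right_ideal)
    also have "\<dots> = 0"
      using proj_rmul_power[where y=y and n=n and w=u] n endo.linear_0[OF linear_proj] by simp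
    finally show "\<exists>n. ((\<lambda>z. proj_product z y) ^^ n) (proj u) = 0"
      unfolding proj_product_def by blast
  qed
  moreover have "u - proj u \<in> nil_vectors proj_product"
    using I_subset_nil_vectors[OF ad_nil] proj_complement_in_I by blast
  ultimately have "proj u + (u - proj u) \<in> nil_vectors proj_product"
    using subspace_add[OF nil_vectors_subspace[OF bilinear_proj_product]] by blast
  then show "u \<in> nil_vectors proj_product" by simp
qed

end

text \<open>The Fitting decomposition of a right multiplication R(e) is a splitting of this
  kind: the power S of R(e) commutes with right multiplications, its image is a left
  ideal as it equals the image of R(e) S, and it is commutative as it lies in the
  image of R(e).\<close>

lemma (in LR_space) fitting_splitting:
  assumes range_stable: "range (rmul e ^^ Suc N) = range (rmul e ^^ N)"
    and complementary: "complementary_subspaces scale {x. (rmul e ^^ N) x = 0} (range (rmul e ^^ N))"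
  shows "LR_splitting scale br p {x. (rmul e ^^ N) x = 0} (range (rmul e ^^ N))"
proof (rule LR_splitting.intro[OF LR_space_axioms complementary], rule LR_splitting_axioms.intro)
  show "p a z \<in> {x. (rmul e ^^ N) x = 0}" if "a \<in> {x. (rmul e ^^ N) x = 0}" for a z
    using that by (simp add: rmul_power_comm mult_zero_left)
  show "p x b \<in> range (rmul e ^^ N)" if "b \<in> range (rmul e ^^ N)" for x b
    using lmul_range_rmul_power[where e = e and n = N] that range_stable by simp
  show "p b z \<in> range (rmul e ^^ N)" if "b \<in> range (rmul e ^^ N)" for b z
    using that by (auto simp: rmul_power_comm[symmetric])
  show "p b c = p c b" if "b \<in> range (rmul e ^^ N)" "c \<in> range (rmul e ^^ N)" for b c
  proof -
    have "range (rmul e ^^ N) = range (rmul e \<circ> (rmul e ^^ N))"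
      using range_stable by simp
    also have "\<dots> \<subseteq> range (rmul e)" by auto
    finally have "range (rmul e ^^ N) \<subseteq> range (rmul e)" .
    then have "b \<in> range (rmul e)" "c \<in> range (rmul e)" using that by blast+
    then obtain b' c' where "b = p b' e" "c = p c' e" by (auto elim!: rangeE)
    then show ?thesis by (simp only: rmul_range_comm)
  qed
qed

context finite_dimensional_vector_space
begin

text \<open>Key step: if some right multiplication R(e) is not nilpotent on v, the Fitting
  decomposition of R(e) yields an LR-structure with strictly more nil vectors; the
  I-component of v is new, as R(e) is nilpotent on K but not on v.\<close>

lemma enlarge_nil_vectors:
  assumes LR: "LR_structure scale br p"
    and ad_nil: "\<And>y. \<exists>n. (br y ^^ n) = (\<lambda>_. 0)"
    and v: "v \<notin> nil_vectors p"
  shows "\<exists>q. LR_structure scale br q \<and> nil_vectors p \<subset> nil_vectors q"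
proof -
  interpret LR_space scale br p
    using LR by (intro LR_space.intro LR_space_axioms.intro vector_space_axioms)
  obtain e where e: "\<And>n. (rmul e ^^ n) v \<noteq> 0" using v unfolding nil_vectors_def by blast
  obtain N where "range (rmul e ^^ Suc N) = range (rmul e ^^ N)"
    and "complementary_subspaces scale {x. (rmul e ^^ N) x = 0} (range (rmul e ^^ N))"
    using fitting_decomposition[OF linear_rmul] by blast
  then interpret S: LR_splitting scale br p "{x. (rmul e ^^ N) x = 0}" "range (rmul e ^^ N)"
    by (rule fitting_splitting)
  define v' where "v' = v - S.proj v"
  have "v' \<in> nil_vectors S.proj_product"
    using S.I_subset_nil_vectors[OF ad_nil] S.proj_complement_in_I unfolding v'_def by blast
  moreover have "v' \<notin> nil_vectors p"
  proof
    assume "v' \<in> nil_vectors p"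
    then obtain n where "(rmul e ^^ n) v' = 0" unfolding nil_vectors_def by blast
    then have "(rmul e ^^ (n + N)) v' = 0"
      using funpow_zero_mono[of "rmul e", OF mult_zero_left] by simp
    moreover have "(rmul e ^^ (n + N)) (S.proj v) = 0"
      using S.proj_in_K[of v] by (simp add: funpow_add endo.linear_0[OF endomorphism_funpow[OF linear_rmul]])
    ultimately have "(rmul e ^^ (n + N)) (S.proj v + v') = 0"
      using endo.linear_add[OF endomorphism_funpow[OF linear_rmul]] by simp
    then show False using e[of "n + N"] unfolding v'_def by simp
  qed
  ultimately show ?thesis using S.LR_proj_product S.nil_vectors_subset[OF ad_nil] by blast
qed

text \<open>Iterating the key step, which raises the dimension of the nil vectors, ends with
  an LR-structure whose nil vectors are the whole space.\<close>

lemma exists_LR_with_full_nil_vectors: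
  assumes "LR_structure scale br p" and ad_nil: "\<And>y. \<exists>n. (br y ^^ n) = (\<lambda>_. 0)"
  shows "\<exists>q. LR_structure scale br q \<and> nil_vectors q = UNIV"
  using assms(1)
proof (induction "dimension - dim (nil_vectors p)" arbitrary: p rule: less_induct)
  case less
  show ?case
  proof (cases "nil_vectors p = UNIV")
    case False
    then obtain v where "v \<notin> nil_vectors p" by blast
    then obtain q where q: "LR_structure scale br q" "nil_vectors p \<subset> nil_vectors q"
      using enlarge_nil_vectors[OF less.prems ad_nil] by blast
    have "subspace (nil_vectors p)" "subspace (nil_vectors q)"
      using nil_vectors_subspace less.prems q(1) unfolding LR_structure_def by blast+
    then have "dim (nil_vectors p) < dim (nil_vectors q)"
      using q(2) by (metis dim_psubset span_eq_iff)
    moreover have "dim (nil_vectors q) \<le> dimension" by (rule dim_subset_UNIV)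
    ultimately have "dimension - dim (nil_vectors q) < dimension - dim (nil_vectors p)" by linarith
    then show ?thesis using less.hyps q(1) by blast
  qed (use less.prems in blast)
qed

text \<open>Nilpotency on a basis gives nilpotency of each right multiplication.\<close>

lemma complete_if_nil_vectors_UNIV:
  assumes LR: "LR_structure scale br q" and full: "nil_vectors q = UNIV"
  shows "complete_LR_structure scale br q"
  unfolding complete_LR_structure_def
proof (intro conjI allI)
  show "LR_structure scale br q" by (rule LR)
  fix x
  let ?R = "\<lambda>y. q y x"
  have R: "endomorphism ?R" using bilinear_linear_right LR unfolding LR_structure_def by blast
  have "\<forall>b\<in>Basis. \<exists>n. (?R ^^ n) b = 0" using full unfolding nil_vectors_def by auto
  then obtain n where n: "\<forall>b\<in>Basis. (?R ^^ n) b = 0"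
    using uniform_nilpotency_index[of Basis ?R, OF finite_Basis endo.linear_0[OF R]] by blast
  have "span Basis \<subseteq> {u. (?R ^^ n) u = 0}"
    by (rule span_minimal) (use n endo.linear_subspace_kernel[OF endomorphism_funpow[OF R]] in auto)
  then have "?R ^^ n = (\<lambda>_. 0)" using span_Basis by auto
  then show "\<exists>n. (?R ^^ n) = (\<lambda>_. 0)" by blast
qed

end

text \<open>In a nilpotent Lie algebra every adjoint map is nilpotent, as its k-th power maps
  into the k-th term of the lower central series.\<close>

lemma (in vector_space) ad_nilpotent:
  assumes "nilpotent_lie scale br"
  shows "\<exists>n. (br y ^^ n) = (\<lambda>_. 0)"
proof -
  obtain N where N: "lower_central_series scale br N = {0}"
    using assms unfolding nilpotent_lie_def by blast
  have "(br y ^^ k) x \<in> lower_central_series scale br k" for x k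
  proof (induction k)
    case (Suc k)
    then have "br y ((br y ^^ k) x) \<in> {br a b | a b. b \<in> lower_central_series scale br k}"
      by blast
    then show ?case by (simp add: span_base)
  qed simp
  then have "(br y ^^ N) = (\<lambda>_. 0)" using N by auto
  then show ?thesis ..
qed

lemma finite_dimensional_vector_space_exists:
  assumes "vector_space scale" and "finite_dimensional scale"
  shows "\<exists>B. finite_dimensional_vector_space scale B"
proof -
  interpret vector_space scale by fact
  obtain S where S: "finite S" "span S = UNIV"
    using assms(2) unfolding finite_dimensional_def by blast
  obtain B where B: "B \<subseteq> S" "independent B" "S \<subseteq> span B"
    using maximal_independent_subset[of S] by blast
  have "span B = UNIV" using S(2) B(3) span_mono span_span by (metis top.extremum_uniqueI)
  then have "finite_dimensional_vector_space scale B"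
    using B S(1) by unfold_locales (auto intro: finite_subset)
  then show ?thesis ..
qed

theorem mainTheorem3:
  fixes scale :: "'k::field_char_0 \<Rightarrow> 'v::ab_group_add \<Rightarrow> 'v"
    and br :: "'v \<Rightarrow> 'v \<Rightarrow> 'v"
  assumes "lie_algebra scale br"
    and "finite_dimensional scale"
    and "nilpotent_lie scale br"
    and "\<exists>p. LR_structure scale br p"
  shows "\<exists>q. complete_LR_structure scale br q"
proof -
  interpret vector_space scale using assms(1) unfolding lie_algebra_def by blast
  obtain B where "finite_dimensional_vector_space scale B"
    using finite_dimensional_vector_space_exists[OF vector_space_axioms assms(2)] by blast
  then interpret finite_dimensional_vector_space scale B .
  obtain p where "LR_structure scale br p" using assms(4) by blast
  then obtain q where "LR_structure scale br q" and "nil_vectors q = UNIV"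
    using exists_LR_with_full_nil_vectors ad_nilpotent[OF assms(3)] by blast
  then show ?thesis using complete_if_nil_vectors_UNIV by blast
qed

end
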